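(* For every integer $k\geq 1$, the symmetric directed paths satisfy $\chi'_{D_{1,2}}(\overleftrightarrow{P_{2k}}) = 2$ and $\chi'_{D_{1,2}}(\overleftrightarrow{P_{2k+1}}) = 3$. For every integer $n \geq 3$, the symmetric directed cycle satisfies $\chi'_{D_{1,2}}(\overleftrightarrow{C_n}) = 3$.
   Context: $P_n$ denotes the path on $n$ vertices and $C_n$ the cycle on $n$ vertices. For a simple graph $G$, the symmetric digraph $\overleftrightarrow{G}$ is obtained by replacing each edge $uv$ of $G$ by the pair of opposite arcs $\overrightarrow{uv}$ and $\overrightarrow{vu}$. An arc-colouring is proper of type I if any two consecutive arcs $\overrightarrow{uv},\overrightarrow{vw}$ (including $w=u$) receive distinct colours. An arc-colouring is distinguishing if the only automorphism of $\overleftrightarrow{G}$ preserving the colour of every arc is the identity. $\chi'_{D_{1,2}}(\overleftrightarrow{G})$ is the least number of colours in a distinguishing proper arc-colouring of type I of $\overleftrightarrow{G}$. *)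

theory Defs
  imports Main
begin

text \<open>A simple graph is given by a vertex set V and a symmetric irreflexive
edge predicate E. Its symmetric digraph has arc set {(u,v). uv edge}.\<close>

definition sym_arcs :: "'a set \<Rightarrow> ('a \<Rightarrow> 'a \<Rightarrow> bool) \<Rightarrow> ('a \<times> 'a) set" where
  "sym_arcs V E = {(u, v). u \<in> V \<and> v \<in> V \<and> E u v}"

definition digraph_aut :: "'a set \<Rightarrow> ('a \<times> 'a) set \<Rightarrow> ('a \<Rightarrow> 'a) \<Rightarrow> bool" where
  "digraph_aut V A \<sigma> \<longleftrightarrow> bij_betw \<sigma> V V \<and>
     (\<forall>u\<in>V. \<forall>v\<in>V. (u, v) \<in> A \<longleftrightarrow> (\<sigma> u, \<sigma> v) \<in> A)"

text \<open>Proper arc-colouring of type I: consecutive arcs uv, vw (w = u allowed) get distinct colours.\<close>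
definition proper_arc_col_I :: "('a \<times> 'a) set \<Rightarrow> ('a \<times> 'a \<Rightarrow> nat) \<Rightarrow> bool" where
  "proper_arc_col_I A c \<longleftrightarrow>
     (\<forall>u v w. (u, v) \<in> A \<and> (v, w) \<in> A \<longrightarrow> c (u, v) \<noteq> c (v, w))"

definition distinguishing_arc_col :: "'a set \<Rightarrow> ('a \<times> 'a) set \<Rightarrow> ('a \<times> 'a \<Rightarrow> nat) \<Rightarrow> bool" where
  "distinguishing_arc_col V A c \<longleftrightarrow>
     (\<forall>\<sigma>. digraph_aut V A \<sigma> \<and> (\<forall>(u, v) \<in> A. c (\<sigma> u, \<sigma> v) = c (u, v))
          \<longrightarrow> (\<forall>v\<in>V. \<sigma> v = v))"

definition chi_D12 :: "'a set \<Rightarrow> ('a \<Rightarrow> 'a \<Rightarrow> bool) \<Rightarrow> nat" where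
  "chi_D12 V E = (LEAST k. \<exists>c :: 'a \<times> 'a \<Rightarrow> nat.
      (\<forall>a \<in> sym_arcs V E. c a < k) \<and>
      proper_arc_col_I (sym_arcs V E) c \<and>
      distinguishing_arc_col V (sym_arcs V E) c)"

text \<open>Path P_n on vertices 0..n-1 and cycle C_n on vertices 0..n-1.\<close>
definition path_edge :: "nat \<Rightarrow> nat \<Rightarrow> bool" where
  "path_edge u v \<longleftrightarrow> u + 1 = v \<or> v + 1 = u"

definition cycle_edge :: "nat \<Rightarrow> nat \<Rightarrow> nat \<Rightarrow> bool" where
  "cycle_edge n u v \<longleftrightarrow> (u + 1) mod n = v \<or> (v + 1) mod n = u"

end

(*
  With only two colours, a proper arc-colouring of type I gives all out-arcs of a vertex one colour
  and all its in-arcs the other. Along the spanning path 0, 1, ..., n - 1 of P_n or C_n the colour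
  of an arc is therefore the parity of its tail, up to swapping the colours, and every
  parity-preserving automorphism preserves it: the reflection of P_(2k+1) and the rotation by two
  of an even cycle rule out two colours, and an odd cycle has no such colouring at all. Conversely,
  the parity colouring of P_(2k) is distinguishing because the reflection swaps parities, and in
  the other cases a third colour, on the arc (0, 1) or on the out-arcs of the vertex n - 1 of an
  odd cycle, pins down the vertices 0 and 1. Since
  an interior vertex of the path has no neighbours besides its two path neighbours, an
  automorphism fixing 0 and 1 is the identity.
*)
theory Submission
  imports Defs "HOL-Number_Theory.Cong"
begin

definition D12_colouring :: "'a set \<Rightarrow> ('a \<Rightarrow> 'a \<Rightarrow> bool) \<Rightarrow> nat \<Rightarrow> ('a \<times> 'a \<Rightarrow> nat) \<Rightarrow> bool" where
  "D12_colouring V E k c \<longleftrightarrow>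
     (\<forall>a \<in> sym_arcs V E. c a < k) \<and>
     proper_arc_col_I (sym_arcs V E) c \<and>
     distinguishing_arc_col V (sym_arcs V E) c"

lemma chi_D12_eqI:
  assumes "D12_colouring V E m c" and "\<And>c. \<not> D12_colouring V E (m - 1) c"
  shows "chi_D12 V E = m"
proof -
  have "\<not> D12_colouring V E k c'" if "k < m" for k c'
    using assms(2)[of c'] that by (force simp: D12_colouring_def)
  then show ?thesis
    using assms(1) unfolding chi_D12_def D12_colouring_def[symmetric]
    by (intro Least_equality) (blast, metis not_less)
qed

lemma distinguishing_arc_colI:
  assumes "\<And>\<sigma> u. digraph_aut V A \<sigma> \<Longrightarrow> (\<And>x y. (x, y) \<in> A \<Longrightarrow> c (\<sigma> x, \<sigma> y) = c (x, y)) \<Longrightarrow>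
    u \<in> V \<Longrightarrow> \<sigma> u = u"
  shows "distinguishing_arc_col V A c"
  unfolding distinguishing_arc_col_def
proof (intro allI impI ballI, elim conjE)
  fix \<sigma> u
  assume "digraph_aut V A \<sigma>" "\<forall>(x, y)\<in>A. c (\<sigma> x, \<sigma> y) = c (x, y)" "u \<in> V"
  then show "\<sigma> u = u" by (intro assms) auto
qed

lemma distinguishing_arc_colD:
  assumes "distinguishing_arc_col V A c" and "digraph_aut V A \<sigma>"
    and "\<And>x y. (x, y) \<in> A \<Longrightarrow> c (\<sigma> x, \<sigma> y) = c (x, y)" and "u \<in> V"
  shows "\<sigma> u = u"
  using assms unfolding distinguishing_arc_col_def by blast

lemma sym_arcs_swap:
  assumes "\<And>u v. E u v \<Longrightarrow> E v u" and "(u, v) \<in> sym_arcs V E"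
  shows "(v, u) \<in> sym_arcs V E"
  using assms by (auto simp: sym_arcs_def)

lemma proper_arc_col_I_reverse:
  assumes "proper_arc_col_I A c" and "(u, v) \<in> A" and "(v, u) \<in> A"
  shows "c (u, v) \<noteq> c (v, u)"
  using assms unfolding proper_arc_col_I_def by blast

lemma proper_arc_col_I_two_out:
  assumes "proper_arc_col_I A c" and "\<forall>a\<in>A. c a < 2"
    and "(v, u) \<in> A" and "(u, v) \<in> A" and "(u, w) \<in> A"
  shows "c (u, v) = c (u, w)"
proof -
  have "c (v, u) \<noteq> c (u, v)" "c (v, u) \<noteq> c (u, w)"
    using assms(1,3-5) unfolding proper_arc_col_I_def by blast+
  moreover have "c (v, u) < 2" "c (u, v) < 2" "c (u, w) < 2"
    using assms(2-5) by auto
  ultimately show ?thesis by linarith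
qed

lemma no_D12_colouring_one:
  assumes "\<And>u v. E u v \<Longrightarrow> E v u" and "(u, v) \<in> sym_arcs V E"
  shows "\<not> D12_colouring V E 1 c"
proof
  assume "D12_colouring V E 1 c"
  then have "c (u, v) = 0" "c (v, u) = 0" "proper_arc_col_I (sym_arcs V E) c"
    using assms sym_arcs_swap[OF assms] by (auto simp: D12_colouring_def)
  then show False
    using proper_arc_col_I_reverse assms sym_arcs_swap[OF assms] by metis
qed

lemma digraph_aut_sym_arcsD:
  assumes "digraph_aut V (sym_arcs V E) \<sigma>"
  shows "bij_betw \<sigma> V V" and "\<And>u v. u \<in> V \<Longrightarrow> v \<in> V \<Longrightarrow> E (\<sigma> u) (\<sigma> v) \<longleftrightarrow> E u v"
    and "\<And>u v. (u, v) \<in> sym_arcs V E \<Longrightarrow> (\<sigma> u, \<sigma> v) \<in> sym_arcs V E"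
  using assms bij_betwE[of \<sigma> V V]
  by (auto simp: digraph_aut_def sym_arcs_def)

lemma digraph_aut_sym_arcsI:
  assumes "bij_betw \<sigma> V V" and "\<And>u v. u \<in> V \<Longrightarrow> v \<in> V \<Longrightarrow> E (\<sigma> u) (\<sigma> v) \<longleftrightarrow> E u v"
  shows "digraph_aut V (sym_arcs V E) \<sigma>"
  using assms bij_betwE[of \<sigma> V V]
  by (auto simp: digraph_aut_def sym_arcs_def)

lemma neq_mod_2_imp_eq_Suc_mod_2: "(x::nat) < 2 \<Longrightarrow> x \<noteq> a mod 2 \<Longrightarrow> x = Suc a mod 2"
  by presburger

lemma Suc_mod_2_neq: "Suc a mod 2 \<noteq> (a::nat) mod 2" "a mod 2 \<noteq> Suc a mod 2"
  by presburger+

definition parity_col :: "nat \<times> nat \<Rightarrow> nat" where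
  "parity_col = (\<lambda>(u, v). u mod 2)"

definition marked_parity_col :: "nat \<times> nat \<Rightarrow> nat" where
  "marked_parity_col = (\<lambda>(u, v). if (u, v) = (0, 1) then 2 else u mod 2)"

lemma proper_parity_col:
  assumes "\<forall>(u, v)\<in>A. u mod 2 \<noteq> v mod 2"
  shows "proper_arc_col_I A parity_col"
  using assms unfolding proper_arc_col_I_def parity_col_def by fast

lemma proper_marked_parity_col:
  assumes "\<forall>(u, v)\<in>A. u mod 2 \<noteq> v mod 2"
  shows "proper_arc_col_I A marked_parity_col"
  using assms unfolding proper_arc_col_I_def marked_parity_col_def
  by (auto split: if_splits)

lemma marked_parity_col_less_3: "marked_parity_col a < 3"
  by (cases a) (simp add: marked_parity_col_def less_trans[OF mod_less_divisor])

lemma marked_parity_col_eq_2_iff: "marked_parity_col a = 2 \<longleftrightarrow> a = (0, 1)"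
  using mod_less_divisor[of 2 "fst a"] by (cases a) (auto simp: marked_parity_col_def)

locale spanning_path_graph =
  fixes n :: nat and E :: "nat \<Rightarrow> nat \<Rightarrow> bool"
  assumes sym: "\<And>u v. E u v \<Longrightarrow> E v u"
    and chain: "\<And>i. Suc i < n \<Longrightarrow> E i (Suc i)"
begin

lemma chain_arcs:
  assumes "Suc i < n"
  shows "(i, Suc i) \<in> sym_arcs {..<n} E" and "(Suc i, i) \<in> sym_arcs {..<n} E"
  using assms chain[OF assms] sym[OF chain[OF assms]] by (auto simp: sym_arcs_def)

lemma two_colour_chain:
  assumes pr: "proper_arc_col_I (sym_arcs {..<n} E) c" and lt: "\<forall>a\<in>sym_arcs {..<n} E. c a < 2"
    and "Suc i < n"
  shows "c (i, Suc i) = (c (0, 1) + i) mod 2 \<and> c (Suc i, i) = (c (0, 1) + Suc i) mod 2"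
  using \<open>Suc i < n\<close>
proof (induction i)
  case 0
  have "c (1, 0) \<noteq> c (0, 1) mod 2" "c (1, 0) < 2"
    using proper_arc_col_I_reverse[OF pr] chain_arcs[OF 0] lt by auto
  then show ?case
    using lt chain_arcs[OF 0] by (simp add: neq_mod_2_imp_eq_Suc_mod_2)
next
  case (Suc i)
  note arcs = chain_arcs[of i] chain_arcs[OF Suc.prems]
  have "c (Suc i, Suc (Suc i)) = c (Suc i, i)"
    using proper_arc_col_I_two_out[OF pr lt arcs(4) arcs(3) arcs(2)] Suc.prems by simp
  also have "\<dots> = (c (0, 1) + Suc i) mod 2"
    using Suc by simp
  finally have out: "c (Suc i, Suc (Suc i)) = (c (0, 1) + Suc i) mod 2" .
  moreover have "c (Suc (Suc i), Suc i) \<noteq> (c (0, 1) + Suc i) mod 2" "c (Suc (Suc i), Suc i) < 2"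
    using proper_arc_col_I_reverse[OF pr arcs(3,4)] out lt arcs(4) by auto
  ultimately show ?case
    using neq_mod_2_imp_eq_Suc_mod_2[of "c (Suc (Suc i), Suc i)" "c (0, 1) + Suc i"] by simp
qed

lemma two_colour_parity:
  assumes pr: "proper_arc_col_I (sym_arcs {..<n} E) c" and lt: "\<forall>a\<in>sym_arcs {..<n} E. c a < 2"
    and "2 \<le> n" and uv: "(u, v) \<in> sym_arcs {..<n} E"
  shows "c (u, v) = (c (0, 1) + u) mod 2"
proof -
  have vu: "(v, u) \<in> sym_arcs {..<n} E" using sym_arcs_swap[OF sym uv] .
  show ?thesis
  proof (cases "Suc u < n")
    case True
    have "c (u, v) = c (u, Suc u)"
      using proper_arc_col_I_two_out[OF pr lt vu uv chain_arcs(1)[OF True]] .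
    then show ?thesis using two_colour_chain[OF pr lt True] by simp
  next
    case False
    then obtain i where u: "u = Suc i" and i: "Suc i < n"
      using uv \<open>2 \<le> n\<close> by (cases u) (auto simp: sym_arcs_def)
    have "c (u, v) = c (Suc i, i)"
      using proper_arc_col_I_two_out[OF pr lt vu uv] chain_arcs(2)[OF i] u by simp
    then show ?thesis using two_colour_chain[OF pr lt i] u by simp
  qed
qed

lemma no_D12_colouring_two_if_parity_preserving_aut:
  assumes "2 \<le> n" and aut: "digraph_aut {..<n} (sym_arcs {..<n} E) \<sigma>"
    and parity: "\<And>u. u < n \<Longrightarrow> \<sigma> u mod 2 = u mod 2"
    and moved: "w < n" "\<sigma> w \<noteq> w"
  shows "\<not> D12_colouring {..<n} E 2 c"
proof
  assume "D12_colouring {..<n} E 2 c"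
  then have lt: "\<forall>a\<in>sym_arcs {..<n} E. c a < 2" and pr: "proper_arc_col_I (sym_arcs {..<n} E) c"
    and dist: "distinguishing_arc_col {..<n} (sym_arcs {..<n} E) c"
    by (auto simp: D12_colouring_def)
  have "c (\<sigma> u, \<sigma> v) = c (u, v)" if uv: "(u, v) \<in> sym_arcs {..<n} E" for u v
  proof -
    have "\<sigma> u mod 2 = u mod 2" using uv parity by (simp add: sym_arcs_def)
    then have "c (\<sigma> u, \<sigma> v) = (c (0, 1) + u) mod 2"
      using two_colour_parity[OF pr lt \<open>2 \<le> n\<close> digraph_aut_sym_arcsD(3)[OF aut uv]]
      by (metis mod_add_right_eq)
    also have "\<dots> = c (u, v)"
      using two_colour_parity[OF pr lt \<open>2 \<le> n\<close> uv] by simp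
    finally show ?thesis .
  qed
  then show False
    using distinguishing_arc_colD[OF dist aut] moved by blast
qed

end

locale path_like_graph = spanning_path_graph +
  assumes interior_nbrs: "\<And>i v. Suc (Suc i) < n \<Longrightarrow> v < n \<Longrightarrow> E (Suc i) v \<Longrightarrow> v = i \<or> v = Suc (Suc i)"
begin

lemma aut_fixing_0_1_eq_id:
  assumes aut: "digraph_aut {..<n} (sym_arcs {..<n} E) \<sigma>" and fix0: "\<sigma> 0 = 0" and fix1: "\<sigma> 1 = 1"
    and "u \<in> {..<n}"
  shows "\<sigma> u = u"
proof -
  note bij = digraph_aut_sym_arcsD(1)[OF aut]
  have "\<sigma> i = i \<and> \<sigma> (Suc i) = Suc i" if "Suc i < n" for i
    using that
  proof (induction i)
    case 0
    show ?case using fix0 fix1 by simp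
  next
    case (Suc i)
    then have IH: "\<sigma> i = i" "\<sigma> (Suc i) = Suc i" by simp_all
    have "\<sigma> (Suc (Suc i)) < n"
      using bij_betwE[OF bij] Suc.prems by simp
    moreover have "E (Suc i) (\<sigma> (Suc (Suc i)))"
      using digraph_aut_sym_arcsD(2)[OF aut, of "Suc i" "Suc (Suc i)"] chain[OF Suc.prems] IH(2) Suc.prems
      by simp
    ultimately have "\<sigma> (Suc (Suc i)) = i \<or> \<sigma> (Suc (Suc i)) = Suc (Suc i)"
      by (rule interior_nbrs[OF Suc.prems])
    moreover have "\<sigma> (Suc (Suc i)) \<noteq> i"
      using inj_onD[OF bij_betw_imp_inj_on[OF bij], of "Suc (Suc i)" i] Suc.prems IH(1) by auto
    ultimately show ?case using IH(2) by simp
  qed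
  then show ?thesis
    using fix0 \<open>u \<in> {..<n}\<close> by (cases u) simp_all
qed

lemma distinguishing_marked_parity_col:
  assumes "2 \<le> n"
  shows "distinguishing_arc_col {..<n} (sym_arcs {..<n} E) marked_parity_col"
proof (rule distinguishing_arc_colI)
  fix \<sigma> u
  assume aut: "digraph_aut {..<n} (sym_arcs {..<n} E) \<sigma>"
    and pres: "\<And>x y. (x, y) \<in> sym_arcs {..<n} E \<Longrightarrow>
      marked_parity_col (\<sigma> x, \<sigma> y) = marked_parity_col (x, y)"
    and "u \<in> {..<n}"
  have "marked_parity_col (\<sigma> 0, \<sigma> 1) = marked_parity_col (0, 1)"
    using pres chain_arcs(1)[of 0] assms by simp
  then have "marked_parity_col (\<sigma> 0, \<sigma> 1) = 2"
    by (simp add: marked_parity_col_def)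
  then have "\<sigma> 0 = 0" "\<sigma> 1 = 1"
    by (simp_all add: marked_parity_col_eq_2_iff)
  then show "\<sigma> u = u"
    using aut_fixing_0_1_eq_id[OF aut] \<open>u \<in> {..<n}\<close> by simp
qed

end

interpretation path: path_like_graph n path_edge for n
  by unfold_locales (auto simp: path_edge_def)

lemma path_arc_parity: "\<forall>(u, v)\<in>sym_arcs V path_edge. u mod 2 \<noteq> v mod 2"
  by (auto simp: sym_arcs_def path_edge_def Suc_mod_2_neq)

lemma path_aut_zero:
  assumes aut: "digraph_aut {..<n} (sym_arcs {..<n} path_edge) \<sigma>" and "0 < n"
  shows "\<sigma> 0 = 0 \<or> \<sigma> 0 = n - 1"
proof (rule ccontr)
  assume interior: "\<not> (\<sigma> 0 = 0 \<or> \<sigma> 0 = n - 1)"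
  note bij = digraph_aut_sym_arcsD(1)[OF aut]
  have "\<sigma> 0 < n" using bij \<open>0 < n\<close> by (auto dest: bij_betwE)
  with interior have "\<sigma> 0 - 1 \<in> \<sigma> ` {..<n}" "\<sigma> 0 + 1 \<in> \<sigma> ` {..<n}"
    using bij_betw_imp_surj_on[OF bij] by auto
  then obtain x y where x: "x < n" "\<sigma> x = \<sigma> 0 - 1" and y: "y < n" "\<sigma> y = \<sigma> 0 + 1"
    by auto
  have "path_edge (\<sigma> 0) (\<sigma> x)" "path_edge (\<sigma> 0) (\<sigma> y)"
    using x y interior by (auto simp: path_edge_def)
  then have "path_edge 0 x" "path_edge 0 y"
    using digraph_aut_sym_arcsD(2)[OF aut, of 0 x] digraph_aut_sym_arcsD(2)[OF aut, of 0 y]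
      x y \<open>0 < n\<close> by simp_all
  then have "x = y" by (simp add: path_edge_def)
  then show False using x y by simp
qed

lemma path_reflection_aut: "digraph_aut {..<Suc m} (sym_arcs {..<Suc m} path_edge) (\<lambda>u. m - u)"
proof (rule digraph_aut_sym_arcsI)
  show "bij_betw (\<lambda>u. m - u) {..<Suc m} {..<Suc m}"
    by (rule bij_betw_byWitness[where f' = "\<lambda>u. m - u"]) auto
qed (auto simp: path_edge_def)

lemma D12_colouring_even_path:
  assumes "1 \<le> k"
  shows "D12_colouring {..<2*k} path_edge 2 parity_col"
proof -
  have "distinguishing_arc_col {..<2*k} (sym_arcs {..<2*k} path_edge) parity_col"
  proof (rule distinguishing_arc_colI)
    fix \<sigma> u
    assume aut: "digraph_aut {..<2*k} (sym_arcs {..<2*k} path_edge) \<sigma>"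
      and pres: "\<And>x y. (x, y) \<in> sym_arcs {..<2*k} path_edge \<Longrightarrow>
        parity_col (\<sigma> x, \<sigma> y) = parity_col (x, y)"
      and "u \<in> {..<2*k}"
    have "(0, 1) \<in> sym_arcs {..<2*k} path_edge"
      using assms by (auto simp: sym_arcs_def path_edge_def)
    then have "even (\<sigma> 0)" using pres by (fastforce simp: parity_col_def)
    then have "\<sigma> 0 = 0"
      using path_aut_zero[OF aut] assms by presburger
    moreover have "path_edge (\<sigma> 0) (\<sigma> 1)"
      using digraph_aut_sym_arcsD(2)[OF aut, of 0 1] assms by (simp add: path_edge_def)
    ultimately have "\<sigma> 1 = 1" by (simp add: path_edge_def)
    with \<open>\<sigma> 0 = 0\<close> show "\<sigma> u = u"
      using path.aut_fixing_0_1_eq_id[OF aut] \<open>u \<in> {..<2*k}\<close> by simp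
  qed
  moreover have "proper_arc_col_I (sym_arcs {..<2*k} path_edge) parity_col"
    by (rule proper_parity_col[OF path_arc_parity])
  ultimately show ?thesis by (auto simp: D12_colouring_def parity_col_def)
qed

lemma chi_D12_even_path:
  assumes "1 \<le> k"
  shows "chi_D12 {..<2*k} path_edge = 2"
proof (rule chi_D12_eqI)
  show "D12_colouring {..<2*k} path_edge 2 parity_col"
    using D12_colouring_even_path[OF assms] .
  have "(0, 1) \<in> sym_arcs {..<2*k} path_edge"
    using assms by (simp add: sym_arcs_def path_edge_def)
  then show "\<not> D12_colouring {..<2*k} path_edge (2 - 1) c" for c
    using no_D12_colouring_one[OF path.sym] by simp
qed

lemma chi_D12_odd_path:
  assumes "1 \<le> k"
  shows "chi_D12 {..<2*k+1} path_edge = 3"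
proof (rule chi_D12_eqI)
  have "proper_arc_col_I (sym_arcs {..<2*k+1} path_edge) marked_parity_col"
    by (rule proper_marked_parity_col[OF path_arc_parity])
  moreover have "distinguishing_arc_col {..<2*k+1} (sym_arcs {..<2*k+1} path_edge) marked_parity_col"
    using path.distinguishing_marked_parity_col assms by simp
  ultimately show "D12_colouring {..<2*k+1} path_edge 3 marked_parity_col"
    by (simp add: D12_colouring_def marked_parity_col_less_3)
  have parity: "(2*k - u) mod 2 = u mod 2" if "u < Suc (2*k)" for u
  proof -
    obtain t where t: "2*k = u + t" using \<open>u < Suc (2*k)\<close> less_Suc_eq_le le_Suc_ex by blast
    then have "t mod 2 = u mod 2" by presburger
    with t show ?thesis by simp
  qed
  have "\<not> D12_colouring {..<Suc (2*k)} path_edge 2 c" for c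
    by (rule path.no_D12_colouring_two_if_parity_preserving_aut[OF _ path_reflection_aut parity, of 0]) (use assms in simp_all)
  then show "\<not> D12_colouring {..<2*k+1} path_edge (3 - 1) c" for c
    by simp
qed

lemma cycle_edge_iff:
  assumes "u < n" and "v < n"
  shows "cycle_edge n u v \<longleftrightarrow>
    v = Suc u \<or> u = Suc v \<or> (Suc u = n \<and> v = 0) \<or> (Suc v = n \<and> u = 0)"
proof -
  have "(x + 1) mod n = (if Suc x = n then 0 else Suc x)" if "x < n" for x
    using that by (cases "Suc x = n") simp_all
  then show ?thesis
    using assms unfolding cycle_edge_def by auto
qed

lemma cycle_arc_parity:
  assumes "even n"
  shows "\<forall>(u, v)\<in>sym_arcs {..<n} (cycle_edge n). u mod 2 \<noteq> v mod 2"
  using assms by (auto simp: sym_arcs_def cycle_edge_iff Suc_mod_2_neq odd_iff_mod_2_eq_one)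

lemma path_like_graph_cycle: "path_like_graph n (cycle_edge n)"
proof
  show "cycle_edge n v u" if "cycle_edge n u v" for u v
    using that unfolding cycle_edge_def by blast
  show "cycle_edge n i (Suc i)" if "Suc i < n" for i
    using that by (simp add: cycle_edge_def)
  show "v = i \<or> v = Suc (Suc i)" if "Suc (Suc i) < n" "v < n" "cycle_edge n (Suc i) v" for i v
    using that cycle_edge_iff[of "Suc i" n v] by (simp; blast)
qed

interpretation cycle: path_like_graph n "cycle_edge n" for n
  by (rule path_like_graph_cycle)

lemma cycle_rotation_aut:
  assumes "0 < n"
  shows "digraph_aut {..<n} (sym_arcs {..<n} (cycle_edge n)) (\<lambda>u. (u + r) mod n)"
proof (rule digraph_aut_sym_arcsI)
  have cancel: "(x + r) mod n = (y + r) mod n \<longleftrightarrow> x mod n = y mod n" for x y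
    using cong_add_rcancel_nat[of x r y n] by (simp add: cong_def)
  have "inj_on (\<lambda>u. (u + r) mod n) {..<n}"
    by (rule inj_onI) (simp add: cancel)
  moreover have "(\<lambda>u. (u + r) mod n) ` {..<n} \<subseteq> {..<n}"
    using assms by auto
  ultimately show "bij_betw (\<lambda>u. (u + r) mod n) {..<n} {..<n}"
    by (simp add: bij_betw_def endo_inj_surj)
  have shift: "((x + r) mod n + 1) mod n = (y + r) mod n \<longleftrightarrow> (x + 1) mod n = y mod n" for x y
  proof -
    have "((x + r) mod n + 1) mod n = ((x + 1) + r) mod n"
      by (simp add: mod_Suc_eq)
    then show ?thesis by (simp only: cancel)
  qed
  show "cycle_edge n ((u + r) mod n) ((v + r) mod n) \<longleftrightarrow> cycle_edge n u v"
    if "u \<in> {..<n}" "v \<in> {..<n}" for u v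
    unfolding cycle_edge_def shift using that by simp
qed

lemma no_D12_colouring_two_cycle:
  assumes "3 \<le> n"
  shows "\<not> D12_colouring {..<n} (cycle_edge n) 2 c"
proof (cases "even n")
  case True
  have "(u + 2) mod n mod 2 = u mod 2" for u
    using True by (simp add: mod_mod_cancel)
  moreover have "(0 + 2) mod n \<noteq> 0" using assms by simp
  moreover have "digraph_aut {..<n} (sym_arcs {..<n} (cycle_edge n)) (\<lambda>u. (u + 2) mod n)"
    using assms by (intro cycle_rotation_aut) simp
  ultimately show ?thesis
    using cycle.no_D12_colouring_two_if_parity_preserving_aut[of n "\<lambda>u. (u + 2) mod n" 0 c] assms by simp
next
  case False
  show ?thesis
  proof
    assume "D12_colouring {..<n} (cycle_edge n) 2 c"
    then have pr: "proper_arc_col_I (sym_arcs {..<n} (cycle_edge n)) c"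
      and lt: "\<forall>a\<in>sym_arcs {..<n} (cycle_edge n). c a < 2"
      by (auto simp: D12_colouring_def)
    have arcs: "(0, n - 1) \<in> sym_arcs {..<n} (cycle_edge n)" "(n - 1, 0) \<in> sym_arcs {..<n} (cycle_edge n)"
      using assms by (auto simp: sym_arcs_def cycle_edge_iff)
    have "even (n - 1)" using False assms by simp
    then obtain m where m: "n - 1 = 2 * m" ..
    have "c (0, n - 1) = c (0, 1) mod 2"
      using cycle.two_colour_parity[OF pr lt _ arcs(1)] assms by simp
    also have "\<dots> = (c (0, 1) + (n - 1)) mod 2"
      using m by simp
    also have "\<dots> = c (n - 1, 0)"
      using cycle.two_colour_parity[OF pr lt _ arcs(2)] assms by simp
    finally show False
      using proper_arc_col_I_reverse[OF pr arcs] by contradiction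
  qed
qed

text \<open>On an odd cycle the parity colouring clashes at the two even neighbours n - 1 and 0; giving
  the out-arcs of n - 1 the third colour repairs this.\<close>
definition odd_cycle_col :: "nat \<Rightarrow> nat \<times> nat \<Rightarrow> nat" where
  "odd_cycle_col n = (\<lambda>(u, v). if u = n - 1 then 2 else u mod 2)"

lemma proper_odd_cycle_col:
  assumes "2 \<le> n"
  shows "proper_arc_col_I (sym_arcs {..<n} (cycle_edge n)) (odd_cycle_col n)"
  unfolding proper_arc_col_I_def
proof (intro allI impI, elim conjE)
  fix u v w
  assume "(u, v) \<in> sym_arcs {..<n} (cycle_edge n)"
  then have adj: "v = Suc u \<or> u = Suc v \<or> (Suc u = n \<and> v = 0) \<or> (Suc v = n \<and> u = 0)"
    and "u < n" "v < n"
    by (auto simp: sym_arcs_def cycle_edge_iff)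
  show "odd_cycle_col n (u, v) \<noteq> odd_cycle_col n (v, w)"
  proof (cases "v = n - 1")
    case True
    then have "u \<noteq> n - 1" using adj assms by auto
    then show ?thesis using True by (simp add: odd_cycle_col_def)
  next
    case False
    then have "u \<noteq> n - 1 \<Longrightarrow> u mod 2 \<noteq> v mod 2"
      using adj \<open>v < n\<close> by (auto simp: Suc_mod_2_neq)
    then show ?thesis using False by (auto simp: odd_cycle_col_def)
  qed
qed

lemma distinguishing_odd_cycle_col:
  assumes "odd n" and "3 \<le> n"
  shows "distinguishing_arc_col {..<n} (sym_arcs {..<n} (cycle_edge n)) (odd_cycle_col n)"
proof (rule distinguishing_arc_colI)
  fix \<sigma> u
  let ?A = "sym_arcs {..<n} (cycle_edge n)"
  assume aut: "digraph_aut {..<n} ?A \<sigma>"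
    and pres: "\<And>x y. (x, y) \<in> ?A \<Longrightarrow> odd_cycle_col n (\<sigma> x, \<sigma> y) = odd_cycle_col n (x, y)"
    and "u \<in> {..<n}"
  note arc_image = digraph_aut_sym_arcsD(3)[OF aut]
  have last: "(n - 1, 0) \<in> ?A" and first: "(0, 1) \<in> ?A"
    using assms by (auto simp: sym_arcs_def cycle_edge_iff)
  have "odd_cycle_col n (\<sigma> (n - 1), \<sigma> 0) = 2"
    using pres[OF last] by (simp add: odd_cycle_col_def)
  then have fix_last: "\<sigma> (n - 1) = n - 1"
    by (auto simp: odd_cycle_col_def split: if_splits)
  have "odd_cycle_col n (\<sigma> 0, \<sigma> 1) = 0"
    using pres[OF first] assms by (simp add: odd_cycle_col_def)
  then have "even (\<sigma> 0)"
    by (auto simp: odd_cycle_col_def split: if_splits)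
  moreover have "(n - 1, \<sigma> 0) \<in> ?A"
    using arc_image[OF last] fix_last by simp
  then have "\<sigma> 0 = 0 \<or> \<sigma> 0 = n - 2"
    by (auto simp: sym_arcs_def cycle_edge_iff)
  ultimately have fix_0: "\<sigma> 0 = 0"
    using assms by presburger
  have "(0, \<sigma> 1) \<in> ?A"
    using arc_image[OF first] fix_0 by simp
  then have "\<sigma> 1 = 1 \<or> \<sigma> 1 = n - 1"
    by (auto simp: sym_arcs_def cycle_edge_iff)
  moreover have "\<sigma> 1 \<noteq> \<sigma> (n - 1)"
    using inj_onD[OF bij_betw_imp_inj_on[OF digraph_aut_sym_arcsD(1)[OF aut]], of 1 "n - 1"] assms
    by auto
  ultimately have "\<sigma> 1 = 1"
    using fix_last by auto
  with fix_0 show "\<sigma> u = u"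
    using cycle.aut_fixing_0_1_eq_id[OF aut] \<open>u \<in> {..<n}\<close> by simp
qed

lemma D12_colouring_three_cycle:
  assumes "3 \<le> n"
  shows "\<exists>c. D12_colouring {..<n} (cycle_edge n) 3 c"
proof (cases "even n")
  case True
  have "proper_arc_col_I (sym_arcs {..<n} (cycle_edge n)) marked_parity_col"
    by (rule proper_marked_parity_col[OF cycle_arc_parity[OF True]])
  then have "D12_colouring {..<n} (cycle_edge n) 3 marked_parity_col"
    using cycle.distinguishing_marked_parity_col[of n] assms
    by (simp add: D12_colouring_def marked_parity_col_less_3)
  then show ?thesis by blast
next
  case False
  then have "D12_colouring {..<n} (cycle_edge n) 3 (odd_cycle_col n)"
    using proper_odd_cycle_col distinguishing_odd_cycle_col assms
    by (auto simp: D12_colouring_def odd_cycle_col_def)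
  then show ?thesis by blast
qed

lemma chi_D12_cycle:
  assumes "3 \<le> n"
  shows "chi_D12 {..<n} (cycle_edge n) = 3"
  using D12_colouring_three_cycle[OF assms] no_D12_colouring_two_cycle[OF assms]
  by (auto intro: chi_D12_eqI)

theorem mainTheorem3:
  shows "(\<forall>k::nat. k \<ge> 1 \<longrightarrow>
            chi_D12 {..<2*k} path_edge = 2 \<and> chi_D12 {..<2*k+1} path_edge = 3) \<and>
         (\<forall>n::nat. n \<ge> 3 \<longrightarrow> chi_D12 {..<n} (cycle_edge n) = 3)"
  using chi_D12_even_path chi_D12_odd_path chi_D12_cycle by blast

end
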